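(* Let $E\subseteq\mathbb{R}$, let $\theta=(k_r)$ be a lacunary sequence, and let $f:E\to\mathbb{R}$ be Abel continuous on $E$. Then $f$ is lacunary statistically sequentially continuous on $E$ (with respect to $\theta$).
   Context: A sequence $(p_n)$ of real numbers is Abel convergent to $\ell$ if $\sum_{k=0}^{\infty}p_k x^k$ converges for every $0\le x<1$ and $\lim_{x\to 1^-}(1-x)\sum_{k=0}^{\infty}p_k x^k=\ell$. $f$ is Abel continuous on $E$ if for every sequence $(p_n)$ in $E$ Abel convergent to some $\ell\in E$, $(f(p_n))$ is Abel convergent to $f(\ell)$. A lacunary sequence is an increasing sequence $\theta=(k_r)_{r\ge0}$ of nonnegative integers with $k_0=0$, $h_r=k_r-k_{r-1}\to\infty$, and $\liminf_r k_r/k_{r-1}>1$; put $I_r=(k_{r-1},k_r]$. A sequence $(p_k)$ is lacunary statistically convergent to $\ell$ if for every $\varepsilon>0$, $\lim_{r\to\infty}\frac{1}{h_r}|\{k\in I_r:|p_k-\ell|\ge\varepsilon\}|=0$. $f$ is lacunary statistically sequentially continuous on $E$ if for every sequence $(p_n)$ in $E$ lacunary statistically convergent to some $\ell\in E$, $(f(p_n))$ is lacunary statistically convergent to $f(\ell)$. *)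

theory Defs
  imports "HOL-Analysis.Analysis" "HOL-Library.Liminf_Limsup"
begin

definition abel_convergent :: "(nat \<Rightarrow> real) \<Rightarrow> real \<Rightarrow> bool" where
  "abel_convergent p l \<longleftrightarrow>
     (\<forall>x::real. 0 \<le> x \<and> x < 1 \<longrightarrow> summable (\<lambda>k. p k * x ^ k)) \<and>
     ((\<lambda>x. (1 - x) * (\<Sum>k. p k * x ^ k)) \<longlongrightarrow> l) (at_left 1)"

definition abel_continuous_on :: "real set \<Rightarrow> (real \<Rightarrow> real) \<Rightarrow> bool" where
  "abel_continuous_on E f \<longleftrightarrow>
     (\<forall>p l. (\<forall>n. p n \<in> E) \<and> l \<in> E \<and> abel_convergent p l
        \<longrightarrow> abel_convergent (\<lambda>n. f (p n)) (f l))"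

text \<open>A lacunary sequence theta = (k r); h (Suc r) = k (Suc r) - k r, and
  I (Suc r) = {k r <.. k (Suc r)}.\<close>
definition lacunary :: "(nat \<Rightarrow> nat) \<Rightarrow> bool" where
  "lacunary k \<longleftrightarrow> strict_mono k \<and> k 0 = 0 \<and>
     filterlim (\<lambda>r. k (Suc r) - k r) at_top sequentially \<and>
     liminf (\<lambda>r. ereal (real (k (Suc r)) / real (k r))) > 1"

definition lacunary_statistically_convergent ::
  "(nat \<Rightarrow> nat) \<Rightarrow> (nat \<Rightarrow> real) \<Rightarrow> real \<Rightarrow> bool" where
  "lacunary_statistically_convergent k p l \<longleftrightarrow>
     (\<forall>\<epsilon>>0. (\<lambda>r. real (card {n \<in> {k r<..k (Suc r)}. \<bar>p n - l\<bar> \<ge> \<epsilon>})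
                 / real (k (Suc r) - k r)) \<longlonglongrightarrow> 0)"

definition lacunary_stat_seq_continuous_on ::
  "(nat \<Rightarrow> nat) \<Rightarrow> real set \<Rightarrow> (real \<Rightarrow> real) \<Rightarrow> bool" where
  "lacunary_stat_seq_continuous_on k E f \<longleftrightarrow>
     (\<forall>p l. (\<forall>n. p n \<in> E) \<and> l \<in> E \<and> lacunary_statistically_convergent k p l
        \<longrightarrow> lacunary_statistically_convergent k (\<lambda>n. f (p n)) (f l))"

end

theory Submission
  imports Defs
begin

text \<open>An Abel continuous function is continuous on \<open>E\<close>. Otherwise there are \<open>\<epsilon> > 0\<close> and points
  \<open>y\<^sub>n \<in> E\<close> with \<open>\<bar>y\<^sub>n - l\<bar> \<le> 2\<^sup>-\<^sup>n\<close> on which, say, \<open>f y\<^sub>n \<ge> f l + \<epsilon>\<close>. The deviations \<open>y\<^sub>n - l\<close>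
  are summable, so \<open>(y\<^sub>n)\<close> is Abel convergent to \<open>l\<close>; but all Abel means of \<open>(f y\<^sub>n)\<close> are
  at least \<open>f l + \<epsilon>\<close>, so their limit cannot be \<open>f l\<close>. A continuous function, in turn, maps
  lacunary statistically convergent sequences to such sequences: for \<open>\<delta>\<close> chosen by continuity,
  the indices where \<open>\<bar>f (p n) - f l\<bar> \<ge> \<epsilon>\<close> are among those where \<open>\<bar>p n - l\<bar> \<ge> \<delta>\<close>.\<close>

lemma abel_convergent_if_summable_deviation:
  fixes s :: "nat \<Rightarrow> real"
  assumes summable_dev: "summable (\<lambda>n. \<bar>s n - l\<bar>)"
  shows "abel_convergent s l"
proof -
  define d where "d n = s n - l" for n
  define B where "B = (\<Sum>n. \<bar>d n\<bar>)"
  have d_summable: "summable (\<lambda>n. \<bar>d n\<bar>)"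
    using summable_dev by (simp add: d_def)
  have d_term_le: "norm (d n * x ^ n) \<le> \<bar>d n\<bar>" if "0 \<le> x" "x < 1" for n and x :: real
    using that by (simp add: abs_mult power_le_one abs_of_nonneg mult_left_le)
  have d_series: "summable (\<lambda>n. d n * x ^ n)" "\<bar>\<Sum>n. d n * x ^ n\<bar> \<le> B"
    if "0 \<le> x" "x < 1" for x :: real
  proof -
    have norm_summable: "summable (\<lambda>n. norm (d n * x ^ n))"
      by (intro summable_comparison_test[OF _ d_summable]) (use d_term_le[OF that] in auto)
    then show "summable (\<lambda>n. d n * x ^ n)"
      by (rule summable_norm_cancel)
    have "\<bar>\<Sum>n. d n * x ^ n\<bar> \<le> (\<Sum>n. norm (d n * x ^ n))"
      using summable_norm[OF norm_summable] by simp
    also have "\<dots> \<le> B"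
      unfolding B_def using norm_summable d_summable d_term_le[OF that] by (intro suminf_le) auto
    finally show "\<bar>\<Sum>n. d n * x ^ n\<bar> \<le> B" .
  qed
  have split: "(\<lambda>n. s n * x ^ n) = (\<lambda>n. l * x ^ n + d n * x ^ n)" for x :: real
    by (simp add: d_def algebra_simps)
  have summable: "summable (\<lambda>n. s n * x ^ n)"
    and abel_mean: "(1 - x) * (\<Sum>n. s n * x ^ n) - l = (1 - x) * (\<Sum>n. d n * x ^ n)"
    if "0 \<le> x" "x < 1" for x :: real
  proof -
    have geometric: "(\<lambda>n. l * x ^ n) sums (l / (1 - x))"
      using sums_mult[OF geometric_sums, of x l] that by simp
    have "(\<lambda>n. s n * x ^ n) sums (l / (1 - x) + (\<Sum>n. d n * x ^ n))"
      unfolding split using sums_add[OF geometric summable_sums[OF d_series(1)[OF that]]] .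
    then show "summable (\<lambda>n. s n * x ^ n)"
      and "(1 - x) * (\<Sum>n. s n * x ^ n) - l = (1 - x) * (\<Sum>n. d n * x ^ n)"
      using that by (auto simp: sums_iff field_simps)
  qed
  have "eventually (\<lambda>x. x \<in> {0<..<(1::real)}) (at_left 1)"
    by (rule eventually_at_left_real) simp
  then have "eventually (\<lambda>x. norm ((1 - x) * (\<Sum>n. s n * x ^ n) - l) \<le> norm (1 - x) * B)
      (at_left 1)"
    by eventually_elim (use d_series(2) in \<open>auto simp: abel_mean abs_mult intro: mult_left_mono\<close>)
  moreover have "((\<lambda>x. 1 - x) \<longlongrightarrow> (0::real)) (at_left 1)"
    by (intro tendsto_eq_intros) auto
  ultimately have "((\<lambda>x. (1 - x) * (\<Sum>n. s n * x ^ n) - l) \<longlongrightarrow> 0) (at_left 1)"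
    by (rule tendsto_0_le[rotated])
  then show ?thesis
    unfolding abel_convergent_def using summable by (simp add: LIM_zero_iff)
qed

lemma abel_convergent_uminus:
  assumes "abel_convergent p l"
  shows "abel_convergent (\<lambda>n. - p n) (- l)"
proof -
  have "eventually (\<lambda>x. x \<in> {0<..<(1::real)}) (at_left 1)"
    by (rule eventually_at_left_real) simp
  then have "eventually (\<lambda>x. - ((1 - x) * (\<Sum>n. p n * x ^ n)) = (1 - x) * (\<Sum>n. - p n * x ^ n))
      (at_left 1)"
    by eventually_elim (use assms in \<open>auto simp: abel_convergent_def suminf_minus\<close>)
  then show ?thesis
    using assms unfolding abel_convergent_def
    by (auto simp: summable_minus_iff intro: Lim_transform_eventually tendsto_minus)
qed

lemma abel_continuous_on_uminus:
  assumes "abel_continuous_on E f"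
  shows "abel_continuous_on E (\<lambda>y. - f y)"
  using assms abel_convergent_uminus unfolding abel_continuous_on_def by blast

lemma abel_convergent_lower_bound:
  assumes "abel_convergent p l" and lower: "\<And>n. a \<le> p n"
  shows "a \<le> l"
proof -
  have "a \<le> (1 - x) * (\<Sum>n. p n * x ^ n)" if "0 < x" "x < 1" for x :: real
  proof -
    have "(\<lambda>n. a * x ^ n) sums (a / (1 - x))"
      using sums_mult[OF geometric_sums, of x a] that by simp
    moreover have "summable (\<lambda>n. p n * x ^ n)"
      using assms(1) that unfolding abel_convergent_def by simp
    ultimately have "a / (1 - x) \<le> (\<Sum>n. p n * x ^ n)"
      using that lower by (intro sums_le[OF _ _ summable_sums]) (auto intro: mult_right_mono)
    then show ?thesis
      using that by (simp add: field_simps)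
  qed
  moreover have "eventually (\<lambda>x. x \<in> {0<..<(1::real)}) (at_left 1)"
    by (rule eventually_at_left_real) simp
  ultimately have "eventually (\<lambda>x. a \<le> (1 - x) * (\<Sum>n. p n * x ^ n)) (at_left 1)"
    by (auto elim: eventually_mono)
  then show ?thesis
    using assms(1) unfolding abel_convergent_def by (auto intro: tendsto_lowerbound)
qed

lemma abel_continuous_on_ge_at_accumulation:
  assumes abel_cont: "abel_continuous_on E f" and "l \<in> E"
    and accumulate: "\<And>\<delta>. \<delta> > 0 \<Longrightarrow> \<exists>y\<in>E. \<bar>y - l\<bar> < \<delta> \<and> c \<le> f y"
  shows "c \<le> f l"
proof -
  obtain y where y: "\<And>n. y n \<in> E \<and> \<bar>y n - l\<bar> < (1/2) ^ n \<and> c \<le> f (y n)"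
    using accumulate[of "(1/2) ^ _"] by (metis zero_less_divide_1_iff zero_less_numeral zero_less_power)
  have "summable (\<lambda>n. \<bar>y n - l\<bar>)"
    using y by (intro summable_comparison_test[OF _ summable_geometric[of "1/2::real"]])
      (auto intro: less_imp_le)
  then have "abel_convergent y l"
    by (rule abel_convergent_if_summable_deviation)
  then have "abel_convergent (\<lambda>n. f (y n)) (f l)"
    using abel_cont \<open>l \<in> E\<close> y unfolding abel_continuous_on_def by blast
  then show ?thesis
    by (rule abel_convergent_lower_bound) (use y in blast)
qed

lemma abel_continuous_on_imp_continuous_on:
  assumes abel_cont: "abel_continuous_on E f"
  shows "continuous_on E f"
  unfolding continuous_on_iff dist_real_def
proof (intro ballI allI impI)
  fix l \<epsilon> :: real
  assume "l \<in> E" "\<epsilon> > 0"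
  have "\<not> (\<forall>\<delta>>0. \<exists>y\<in>E. \<bar>y - l\<bar> < \<delta> \<and> f l + \<epsilon> \<le> f y)"
    using abel_continuous_on_ge_at_accumulation[OF abel_cont \<open>l \<in> E\<close>] \<open>\<epsilon> > 0\<close> by force
  then obtain \<delta>\<^sub>1 where "\<delta>\<^sub>1 > 0" and above: "\<And>y. y \<in> E \<Longrightarrow> \<bar>y - l\<bar> < \<delta>\<^sub>1 \<Longrightarrow> f y < f l + \<epsilon>"
    by (auto simp: not_le)
  have "\<not> (\<forall>\<delta>>0. \<exists>y\<in>E. \<bar>y - l\<bar> < \<delta> \<and> \<epsilon> - f l \<le> - f y)"
    using abel_continuous_on_ge_at_accumulation[OF abel_continuous_on_uminus[OF abel_cont]
        \<open>l \<in> E\<close>] \<open>\<epsilon> > 0\<close> by force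
  then obtain \<delta>\<^sub>2 where "\<delta>\<^sub>2 > 0" and below: "\<And>y. y \<in> E \<Longrightarrow> \<bar>y - l\<bar> < \<delta>\<^sub>2 \<Longrightarrow> f l - \<epsilon> < f y"
    by (auto simp: not_le algebra_simps)
  show "\<exists>\<delta>>0. \<forall>y\<in>E. \<bar>y - l\<bar> < \<delta> \<longrightarrow> \<bar>f y - f l\<bar> < \<epsilon>"
  proof (intro exI[of _ "min \<delta>\<^sub>1 \<delta>\<^sub>2"] conjI ballI impI)
    fix y assume "y \<in> E" "\<bar>y - l\<bar> < min \<delta>\<^sub>1 \<delta>\<^sub>2"
    then show "\<bar>f y - f l\<bar> < \<epsilon>"
      using above[of y] below[of y] by auto
  qed (use \<open>\<delta>\<^sub>1 > 0\<close> \<open>\<delta>\<^sub>2 > 0\<close> in auto)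
qed

lemma continuous_on_imp_lacunary_stat_seq_continuous_on:
  assumes "continuous_on E f"
  shows "lacunary_stat_seq_continuous_on k E f"
  unfolding lacunary_stat_seq_continuous_on_def lacunary_statistically_convergent_def
proof (intro allI impI)
  fix p l and \<epsilon> :: real
  assume "(\<forall>n. p n \<in> E) \<and> l \<in> E \<and> (\<forall>\<delta>>0. (\<lambda>r. real (card {n \<in> {k r<..k (Suc r)}. \<delta> \<le> \<bar>p n - l\<bar>})
      / real (k (Suc r) - k r)) \<longlonglongrightarrow> 0)"
  then have p: "\<And>n. p n \<in> E" "l \<in> E"
    and stat: "\<And>\<delta>. \<delta> > 0 \<Longrightarrow> (\<lambda>r. real (card {n \<in> {k r<..k (Suc r)}. \<delta> \<le> \<bar>p n - l\<bar>})
      / real (k (Suc r) - k r)) \<longlonglongrightarrow> 0"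
    by auto
  assume "\<epsilon> > 0"
  then obtain \<delta> where "\<delta> > 0" and close: "\<And>y. y \<in> E \<Longrightarrow> \<bar>y - l\<bar> < \<delta> \<Longrightarrow> \<bar>f y - f l\<bar> < \<epsilon>"
    using assms p(2) unfolding continuous_on_iff dist_real_def by blast
  have exceptional_subset: "{n \<in> {k r<..k (Suc r)}. \<epsilon> \<le> \<bar>f (p n) - f l\<bar>}
      \<subseteq> {n \<in> {k r<..k (Suc r)}. \<delta> \<le> \<bar>p n - l\<bar>}" for r
    using close p(1) by (force simp: not_le[symmetric])
  have "real (card {n \<in> {k r<..k (Suc r)}. \<epsilon> \<le> \<bar>f (p n) - f l\<bar>}) / real (k (Suc r) - k r)
      \<le> real (card {n \<in> {k r<..k (Suc r)}. \<delta> \<le> \<bar>p n - l\<bar>}) / real (k (Suc r) - k r)" for r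
    by (intro divide_right_mono) (use card_mono[OF _ exceptional_subset[of r]] in auto)
  then show "(\<lambda>r. real (card {n \<in> {k r<..k (Suc r)}. \<epsilon> \<le> \<bar>f (p n) - f l\<bar>})
      / real (k (Suc r) - k r)) \<longlonglongrightarrow> 0"
    by (intro tendsto_sandwich[OF _ _ tendsto_const stat[OF \<open>\<delta> > 0\<close>]]) auto
qed

theorem corollary3:
  fixes E :: "real set" and k :: "nat \<Rightarrow> nat" and f :: "real \<Rightarrow> real"
  assumes "lacunary k"
    and "abel_continuous_on E f"
  shows "lacunary_stat_seq_continuous_on k E f"
  using assms(2)
  by (intro continuous_on_imp_lacunary_stat_seq_continuous_on abel_continuous_on_imp_continuous_on)

end
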